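(* Let ${\cal H}$ be a hypergraph. Then: (i) if ${\cal H}={\cal H}_1\odot{\cal H}_2$, then $\overline{\cal H}=\overline{{\cal H}_2}\odot\overline{{\cal H}_1}$ (where both gluings use the same new vertex); (ii) if $z$ is a vertex of ${\cal H}$ such that ${\cal H}$ is $z$-decomposable, then $\overline{\cal H}$ is also $z$-decomposable; (iii) if $u$ is an isolated or a universal vertex of ${\cal H}$, then ${\cal H}$ is $u$-decomposable.
   Context: A hypergraph ${\cal H}=(V,{\cal E})$ consists of a finite vertex set $V$ and a set ${\cal E}$ of subsets of $V$. The complement $\overline{\cal H}$ has vertex set $V$ and hyperedges $\{V\setminus e: e\in{\cal E}\}$. Given vertex-disjoint hypergraphs ${\cal H}_1=(V_1,{\cal E}_1)$, ${\cal H}_2=(V_2,{\cal E}_2)$ and a new vertex $z\notin V_1\cup V_2$, the gluing ${\cal H}_1\odot{\cal H}_2$ has vertex set $V_1\cup V_2\cup\{z\}$ and hyperedge set $\{\{z\}\cup e: e\in{\cal E}_1\}\cup\{V_1\cup e: e\in{\cal E}_2\}$. For a vertex $z$, ${\cal H}$ is $z$-decomposable if for every two hyperedges $e,f$ with $z\in e\setminus f$ we have $e\setminus\{z\}\subseteq f$; equivalently, $V=\{z\}\cup V_1\cup V_2$ (disjoint) and ${\cal H}={\cal H}_1\odot{\cal H}_2$ for some hypergraphs ${\cal H}_1$ on $V_1$ and ${\cal H}_2$ on $V_2$ with new vertex $z$. A vertex is universal (resp. isolated) if it is contained in all (resp. no) hyperedges. *)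

theory Defs
  imports Main
begin

type_synonym 'a hypergraph = "'a set \<times> 'a set set"

definition hypergraph :: "'a hypergraph \<Rightarrow> bool" where
  "hypergraph H \<longleftrightarrow> finite (fst H) \<and> (\<forall>e\<in>snd H. e \<subseteq> fst H)"

definition hcompl :: "'a hypergraph \<Rightarrow> 'a hypergraph" where
  "hcompl H = (fst H, (\<lambda>e. fst H - e) ` snd H)"

definition glue :: "'a hypergraph \<Rightarrow> 'a \<Rightarrow> 'a hypergraph \<Rightarrow> 'a hypergraph" where
  "glue H1 z H2 = (fst H1 \<union> fst H2 \<union> {z},
     {insert z e | e. e \<in> snd H1} \<union> {fst H1 \<union> e | e. e \<in> snd H2})"

definition z_decomposable :: "'a hypergraph \<Rightarrow> 'a \<Rightarrow> bool" where
  "z_decomposable H z \<longleftrightarrow>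
     (\<forall>e\<in>snd H. \<forall>f\<in>snd H. z \<in> e - f \<longrightarrow> e - {z} \<subseteq> f)"

definition universal :: "'a hypergraph \<Rightarrow> 'a \<Rightarrow> bool" where
  "universal H u \<longleftrightarrow> u \<in> fst H \<and> (\<forall>e\<in>snd H. u \<in> e)"

definition isolated :: "'a hypergraph \<Rightarrow> 'a \<Rightarrow> bool" where
  "isolated H u \<longleftrightarrow> u \<in> fst H \<and> (\<forall>e\<in>snd H. u \<notin> e)"

end

theory Submission
  imports Defs
begin

lemma hcompl_glue:
  assumes "hypergraph H1" "hypergraph H2" "fst H1 \<inter> fst H2 = {}" "z \<notin> fst H1 \<union> fst H2"
  shows "hcompl (glue H1 z H2) = glue (hcompl H2) z (hcompl H1)"
proof -
  obtain V1 E1 V2 E2 where H: "H1 = (V1, E1)" "H2 = (V2, E2)" by fastforce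
  let ?V = "V1 \<union> V2 \<union> {z}"
  have compl_left: "?V - insert z e = V2 \<union> (V1 - e)" if "e \<in> E1" for e
    using assms that H by (auto simp: hypergraph_def)
  have compl_right: "?V - (V1 \<union> e) = insert z (V2 - e)" if "e \<in> E2" for e
    using assms that H by (auto simp: hypergraph_def)
  have "(\<lambda>e. ?V - e) ` ({insert z e |e. e \<in> E1} \<union> {V1 \<union> e |e. e \<in> E2})
      = {insert z e |e. e \<in> (\<lambda>e. V2 - e) ` E2} \<union> {V2 \<union> e |e. e \<in> (\<lambda>e. V1 - e) ` E1}"
    (is "?L = ?R")
  proof -
    have "?L = (\<lambda>e. V2 \<union> (V1 - e)) ` E1 \<union> (\<lambda>e. insert z (V2 - e)) ` E2"
      unfolding setcompr_eq_image image_Un image_image Collect_mem_eq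
      using image_cong[OF refl compl_left, of E1 id] image_cong[OF refl compl_right, of E2 id]
      by simp
    also have "\<dots> = ?R" by (auto simp: setcompr_eq_image)
    finally show ?thesis .
  qed
  moreover have "?V = V2 \<union> V1 \<union> {z}" by blast
  ultimately show ?thesis
    unfolding H hcompl_def glue_def fst_conv snd_conv by (simp only: prod.inject)
qed

lemma z_decomposable_hcompl:
  assumes "z_decomposable H z"
  shows "z_decomposable (hcompl H) z"
  unfolding z_decomposable_def
proof (intro ballI impI)
  fix e' f'
  assume "e' \<in> snd (hcompl H)" "f' \<in> snd (hcompl H)" and z: "z \<in> e' - f'"
  then obtain e f where ef: "e \<in> snd H" "f \<in> snd H" "e' = fst H - e" "f' = fst H - f"
    by (auto simp: hcompl_def)
  with z have "z \<in> f - e" by auto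
  with assms ef have "f - {z} \<subseteq> e" by (auto simp: z_decomposable_def)
  with ef show "e' - {z} \<subseteq> f'" by auto
qed

lemma z_decomposable_if_isolated: "isolated H u \<Longrightarrow> z_decomposable H u"
  by (auto simp: z_decomposable_def isolated_def)

lemma z_decomposable_if_universal: "universal H u \<Longrightarrow> z_decomposable H u"
  by (auto simp: z_decomposable_def universal_def)

theorem proposition4:
  fixes H :: "'a hypergraph"
  assumes "hypergraph H"
  shows "(\<forall>H1 H2 z. hypergraph H1 \<and> hypergraph H2 \<and> fst H1 \<inter> fst H2 = {}
              \<and> z \<notin> fst H1 \<union> fst H2 \<and> H = glue H1 z H2
              \<longrightarrow> hcompl H = glue (hcompl H2) z (hcompl H1))
       \<and> (\<forall>z. z \<in> fst H \<and> z_decomposable H z \<longrightarrow> z_decomposable (hcompl H) z)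
       \<and> (\<forall>u. isolated H u \<or> universal H u \<longrightarrow> z_decomposable H u)"
proof (intro conjI allI impI)
  fix H1 H2 z
  assume "hypergraph H1 \<and> hypergraph H2 \<and> fst H1 \<inter> fst H2 = {}
    \<and> z \<notin> fst H1 \<union> fst H2 \<and> H = glue H1 z H2"
  then show "hcompl H = glue (hcompl H2) z (hcompl H1)"
    using hcompl_glue by (elim conjE) simp
next
  fix z
  assume "z \<in> fst H \<and> z_decomposable H z"
  then show "z_decomposable (hcompl H) z"
    by (simp add: z_decomposable_hcompl)
next
  fix u
  assume "isolated H u \<or> universal H u"
  then show "z_decomposable H u"
    using z_decomposable_if_isolated z_decomposable_if_universal by (elim disjE)
qed

end
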